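(* Fix $\beta\in\mathbb{R}$. Consider the working variance model $\{\nu_\gamma:\gamma\in\Gamma\}$, $\Gamma=\mathbb{R}_+^2$, given by $$\nu_\gamma(x)=\gamma_1\,\mathbb{1}_{[0,\infty)}(x)+\gamma_2\,\mathbb{1}_{(-\infty,0)}(x),\qquad \gamma=(\gamma_1,\gamma_2)\in\mathbb{R}_+^2 .$$ Then for any $\tau,\sigma>0$, any (arbitrarily small) $\alpha>0$ and any (arbitrarily large) $\eta\ge 1$, there exists a distribution $P\in\mathcal{P}_{\mathrm{Het}}$ such that $$\inf_{\tilde P\in\mathcal{P}_{\mathrm{Hom}}}\mathrm{KL}(\tilde P\,\|\,P)\le\alpha,\qquad \mathrm{Var}_P(X)=\tau^2,\qquad \mathbb{E}_P[\mathrm{Var}_P(Y\mid X)]=\sigma^2,$$ and $$\frac{V_P(\gamma_{P,\mathrm{EQML}})\wedge V_P(\gamma_{P,\mathrm{GEE}})}{\inf_{\gamma\in\Gamma}V_P(\gamma)}\ \ge\ \eta .$$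
   Context: All distributions are joint laws $P$ of a pair $(Y,X)\in\mathbb{R}\times\mathbb{R}$ (univariate response and univariate random covariate). $\mathcal{P}_{\mathrm{Hom}}$ is the set of laws $P$ such that $Y\mid X\sim N(X\beta,s^2)$ for some constant $s>0$ (with arbitrary marginal law of $X$). $\mathcal{P}_{\mathrm{Het}}$ is the set of laws $P$ such that $Y\mid X\sim N(X\beta,v(X))$ for some measurable function $v$ with $\mathbb{E}[v(X)]<\infty$ and $v(X)>0$ almost surely (with arbitrary marginal law of $X$). For laws $P_1,P_2$ absolutely continuous with respect to Lebesgue measure, $\mathrm{KL}(P_1\|P_2)=\int\log\big(\tfrac{dP_1}{dP_2}\big)\,dP_1$. For $\gamma\in\Gamma$, the sandwich loss (asymptotic variance of the weighted least squares estimator with weights $1/\nu_\gamma$) is $$V_P(\gamma)=\mathbb{E}_P\Big[\frac{X^2}{\nu_\gamma(X)}\Big]^{-2}\,\mathbb{E}_P\Big[\frac{\mathrm{Var}_P(Y\mid X)\,X^2}{\nu_\gamma(X)^2}\Big].$$ The population EQML and GEE dispersion parameters are $$\gamma_{P,\mathrm{EQML}}=\operatorname*{argmin}_{\gamma\in\Gamma}\mathbb{E}_P\Big[\log\nu_\gamma(X)+\frac{\mathrm{Var}_P(Y\mid X)}{\nu_\gamma(X)}\Big],\qquad \gamma_{P,\mathrm{GEE}}=\operatorname*{argmin}_{\gamma\in\Gamma}\mathbb{E}_P\Big[\big(\nu_\gamma(X)-\mathrm{Var}_P(Y\mid X)\big)^2\Big].$$ $a\wedge b$ denotes $\min(a,b)$.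 *)

theory Defs
  imports "HOL-Probability.Probability"
begin

text \<open>Joint laws are measures on pairs (Y, X). The law with X-marginal mu and
  Y given X = x distributed as N(x * beta, v x) (variance v x, standard deviation sqrt (v x)).\<close>
definition cond_normal_law :: "real measure \<Rightarrow> real \<Rightarrow> (real \<Rightarrow> real) \<Rightarrow> (real \<times> real) measure" where
  "cond_normal_law \<mu> \<beta> v =
     \<mu> \<bind> (\<lambda>x. distr (density lborel (\<lambda>y. ennreal (normal_density (x * \<beta>) (sqrt (v x)) y)))
                     (borel :: (real \<times> real) measure) (\<lambda>y. (y, x)))"

definition het_model :: "real measure \<Rightarrow> (real \<Rightarrow> real) \<Rightarrow> bool" where
  "het_model \<mu> v \<longleftrightarrow> prob_space \<mu> \<and> sets \<mu> = sets borel \<and> v \<in> borel_measurable borel \<and>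
     (AE x in \<mu>. 0 < v x) \<and> integrable \<mu> v"

definition in_Het :: "real \<Rightarrow> (real \<times> real) measure \<Rightarrow> bool" where
  "in_Het \<beta> P \<longleftrightarrow> (\<exists>\<mu> v. het_model \<mu> v \<and> P = cond_normal_law \<mu> \<beta> v)"

definition in_Hom :: "real \<Rightarrow> (real \<times> real) measure \<Rightarrow> bool" where
  "in_Hom \<beta> P \<longleftrightarrow> (\<exists>\<mu> s. prob_space \<mu> \<and> sets \<mu> = sets borel \<and> 0 < s \<and>
                       P = cond_normal_law \<mu> \<beta> (\<lambda>_. s\<^sup>2))"

text \<open>KL(P1 || P2) = integral of log (dP1/dP2) dP1 (natural logarithm).\<close>
definition KL :: "(real \<times> real) measure \<Rightarrow> (real \<times> real) measure \<Rightarrow> real" where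
  "KL P1 P2 = KL_divergence (exp 1) P2 P1"

definition Gamma :: "(real \<times> real) set" where
  "Gamma = {\<gamma>. 0 < fst \<gamma> \<and> 0 < snd \<gamma>}"

definition nu :: "real \<times> real \<Rightarrow> real \<Rightarrow> real" where
  "nu \<gamma> x = (if 0 \<le> x then fst \<gamma> else snd \<gamma>)"

text \<open>Sandwich loss; cv is the conditional variance function, i.e. Var_P(Y | X) = cv X.\<close>
definition sandwich :: "(real \<times> real) measure \<Rightarrow> (real \<Rightarrow> real) \<Rightarrow> real \<times> real \<Rightarrow> real" where
  "sandwich P cv \<gamma> =
     (\<integral>z. (snd z)\<^sup>2 / nu \<gamma> (snd z) \<partial>P) powi (-2) *
     (\<integral>z. cv (snd z) * (snd z)\<^sup>2 / (nu \<gamma> (snd z))\<^sup>2 \<partial>P)"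

definition eqml_obj :: "(real \<times> real) measure \<Rightarrow> (real \<Rightarrow> real) \<Rightarrow> real \<times> real \<Rightarrow> real" where
  "eqml_obj P cv \<gamma> = (\<integral>z. ln (nu \<gamma> (snd z)) + cv (snd z) / nu \<gamma> (snd z) \<partial>P)"

definition gee_obj :: "(real \<times> real) measure \<Rightarrow> (real \<Rightarrow> real) \<Rightarrow> real \<times> real \<Rightarrow> real" where
  "gee_obj P cv \<gamma> = (\<integral>z. (nu \<gamma> (snd z) - cv (snd z))\<^sup>2 \<partial>P)"

definition is_argmin_on :: "((real \<times> real) \<Rightarrow> real) \<Rightarrow> (real \<times> real) set \<Rightarrow> real \<times> real \<Rightarrow> bool" where
  "is_argmin_on f S g \<longleftrightarrow> g \<in> S \<and> (\<forall>h\<in>S. f g \<le> f h)"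

end

theory Submission
  imports Defs
begin

text \<open>
  X is a mixture of three uniform blocks: mass \<open>1 - 2p\<close> on \<open>[c, 2c]\<close>, mass \<open>p\<close> on
  \<open>[-2c, -c]\<close> and mass \<open>p\<close> on the far block \<open>[-2cL, -cL]\<close>, where \<open>p L\<^sup>2 = 1\<close>; the
  conditional variance is \<open>\<kappa>\<close> except on the far block, where it is \<open>\<kappa> p\<close>. Because
  \<open>p L\<^sup>2 = 1\<close>, the far block contributes as much to \<open>E X\<^sup>2\<close> as the bulk, namely about
  \<open>r = 7 c\<^sup>2 / 3\<close>, with noise smaller by the factor p. The working model has one variance per
  sign of X, and both EQML and GEE return the blockwise averages \<open>(\<kappa>, \<kappa> (1 + p) / 2)\<close>,
  which weight the far block no more than the bulk, so their sandwich loss is at least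
  \<open>\<kappa> / (18 r)\<close>. The parameter \<open>(\<kappa>, 2 \<kappa> p / (1 + p))\<close> lets the far block dominate and
  achieves at most \<open>2 p \<kappa> / r\<close>: the ratio is at least \<open>1 / (36 p)\<close>. Conditioning on
  \<open>X \<ge> -2c\<close> deletes the far block and leaves a homoscedastic law at Kullback-Leibler
  distance \<open>- ln (1 - p)\<close>. It remains to take p small and to choose c and \<open>\<kappa>\<close> so that
  \<open>Var X = \<tau>\<^sup>2\<close> and \<open>E Var(Y | X) = \<sigma>\<^sup>2\<close>.
\<close>

definition normal_kernel :: "real \<Rightarrow> (real \<Rightarrow> real) \<Rightarrow> real \<Rightarrow> (real \<times> real) measure" where
  "normal_kernel \<beta> v x = distr (density lborel (\<lambda>y. ennreal (normal_density (x * \<beta>) (sqrt (v x)) y)))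
     borel (\<lambda>y. (y, x))"

lemma cond_normal_law_eq_bind: "cond_normal_law \<mu> \<beta> v = \<mu> \<bind> normal_kernel \<beta> v"
  unfolding cond_normal_law_def normal_kernel_def ..

lemma sets_normal_kernel [simp]: "sets (normal_kernel \<beta> v x) = sets borel"
  by (simp add: normal_kernel_def)

lemma space_normal_kernel [simp]: "space (normal_kernel \<beta> v x) = UNIV"
  using sets_eq_imp_space_eq[OF sets_normal_kernel] by simp

lemma measurable_fst_borel [measurable]: "fst \<in> borel_measurable (borel :: (real \<times> real) measure)"
  using measurable_fst[of "borel :: real measure" "borel :: real measure"] by (simp add: borel_prod)

lemma measurable_snd_borel [measurable]: "snd \<in> borel_measurable (borel :: (real \<times> real) measure)"
  using measurable_snd[of "borel :: real measure" "borel :: real measure"] by (simp add: borel_prod)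

lemma snd_vimage_in_sets_borel:
  "B \<in> sets borel \<Longrightarrow> snd -` B \<in> sets (borel :: (real \<times> real) measure)"
  using measurable_sets[OF measurable_snd_borel] by simp

lemma nn_integral_normal_kernel:
  assumes [measurable]: "f \<in> borel_measurable (borel :: (real \<times> real) measure)"
  shows "(\<integral>\<^sup>+z. f z \<partial>normal_kernel \<beta> v x) =
    (\<integral>\<^sup>+y. ennreal (normal_density (x * \<beta>) (sqrt (v x)) y) * f (y, x) \<partial>lborel)"
  unfolding normal_kernel_def
  by (simp add: nn_integral_distr nn_integral_density normal_density_def)

lemma emeasure_normal_kernel:
  assumes "A \<in> sets borel"
  shows "emeasure (normal_kernel \<beta> v x) A =
    (\<integral>\<^sup>+y. ennreal (normal_density (x * \<beta>) (sqrt (v x)) y) * indicator A (y, x) \<partial>lborel)"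
  using nn_integral_normal_kernel[of "indicator A" \<beta> v x] assms by simp

lemma prob_space_normal_kernel: "0 < v x \<Longrightarrow> prob_space (normal_kernel \<beta> v x)"
  unfolding normal_kernel_def
  by (intro prob_space.prob_space_distr prob_space_normal_density) auto

lemma normal_kernel_measurable:
  assumes [measurable]: "v \<in> borel_measurable borel" and "\<And>x. 0 < v x" and "sets M = sets borel"
  shows "normal_kernel \<beta> v \<in> measurable M (subprob_algebra borel)"
proof (rule measurable_subprob_algebra)
  fix x
  show "subprob_space (normal_kernel \<beta> v x)"
    by (simp add: prob_space_imp_subprob_space prob_space_normal_kernel \<open>\<And>x. 0 < v x\<close>)
next
  fix A :: "(real \<times> real) set" assume [measurable]: "A \<in> sets borel"
  have "(\<lambda>x. \<integral>\<^sup>+y. ennreal (normal_density (x * \<beta>) (sqrt (v x)) y) * indicator A (y, x) \<partial>lborel)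
      \<in> borel_measurable borel"
    unfolding normal_density_def by measurable
  then show "(\<lambda>x. emeasure (normal_kernel \<beta> v x) A) \<in> borel_measurable M"
    by (simp add: emeasure_normal_kernel measurable_cong_sets[OF \<open>sets M = sets borel\<close> refl])
qed auto

lemma emeasure_normal_kernel_UNIV: "0 < v x \<Longrightarrow> emeasure (normal_kernel \<beta> v x) UNIV = 1"
  using prob_space.emeasure_space_1[OF prob_space_normal_kernel] by simp

lemma emeasure_snd_vimage_normal_kernel:
  assumes "0 < v x" and "B \<in> sets borel"
  shows "emeasure (normal_kernel \<beta> v x) (snd -` B) = indicator B x"
proof -
  have "emeasure (normal_kernel \<beta> v x) (snd -` B) =
      (\<integral>\<^sup>+y. ennreal (normal_density (x * \<beta>) (sqrt (v x)) y) * indicator B x \<partial>lborel)"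
    using nn_integral_normal_kernel[of "indicator (snd -` B)" \<beta> v x] snd_vimage_in_sets_borel[OF assms(2)]
    by (simp add: nn_integral_indicator[symmetric] indicator_vimage del: nn_integral_indicator)
  also have "\<dots> = emeasure (normal_kernel \<beta> v x) UNIV * indicator B x"
    using nn_integral_normal_kernel[of "\<lambda>_. 1" \<beta> v x] by (simp add: nn_integral_multc)
  finally show ?thesis
    using emeasure_normal_kernel_UNIV[of v, OF assms(1)] by simp
qed

context
  fixes \<mu> :: "real measure" and \<beta> :: real and v :: "real \<Rightarrow> real"
  assumes v_measurable [measurable]: "v \<in> borel_measurable borel" and v_pos: "\<And>x. 0 < v x"
    and sets_\<mu>: "sets \<mu> = sets borel"
begin

lemma normal_kernel_in_subprob_algebra: "normal_kernel \<beta> v \<in> measurable \<mu> (subprob_algebra borel)"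
  using normal_kernel_measurable[OF v_measurable v_pos sets_\<mu>] .

lemma space_\<mu>_nonempty: "space \<mu> \<noteq> {}"
  using sets_eq_imp_space_eq[OF sets_\<mu>] by simp

lemma sets_cond_normal_law [simp]: "sets (cond_normal_law \<mu> \<beta> v) = sets borel"
  unfolding cond_normal_law_eq_bind by (rule sets_bind[OF _ space_\<mu>_nonempty]) simp

lemma space_cond_normal_law [simp]: "space (cond_normal_law \<mu> \<beta> v) = UNIV"
  using sets_eq_imp_space_eq[OF sets_cond_normal_law] by simp

lemma emeasure_cond_normal_law:
  "A \<in> sets borel \<Longrightarrow> emeasure (cond_normal_law \<mu> \<beta> v) A = (\<integral>\<^sup>+x. emeasure (normal_kernel \<beta> v x) A \<partial>\<mu>)"
  unfolding cond_normal_law_eq_bind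
  by (rule emeasure_bind[OF space_\<mu>_nonempty normal_kernel_in_subprob_algebra])

lemma prob_space_cond_normal_law:
  assumes "prob_space \<mu>" shows "prob_space (cond_normal_law \<mu> \<beta> v)"
proof
  have "emeasure (cond_normal_law \<mu> \<beta> v) UNIV = (\<integral>\<^sup>+x. 1 \<partial>\<mu>)"
    using emeasure_cond_normal_law[of UNIV] emeasure_normal_kernel_UNIV[of v, OF v_pos] by simp
  also have "\<dots> = 1"
    using prob_space.emeasure_space_1[OF assms] by (simp add: sets_eq_imp_space_eq[OF sets_\<mu>])
  finally show "emeasure (cond_normal_law \<mu> \<beta> v) (space (cond_normal_law \<mu> \<beta> v)) = 1"
    by simp
qed

lemma measurable_snd_cond_normal_law [measurable]: "snd \<in> borel_measurable (cond_normal_law \<mu> \<beta> v)"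
  by (simp add: measurable_cong_sets[OF sets_cond_normal_law refl])

lemma distr_snd_cond_normal_law: "distr (cond_normal_law \<mu> \<beta> v) borel snd = \<mu>"
proof (rule measure_eqI)
  fix B assume "B \<in> sets (distr (cond_normal_law \<mu> \<beta> v) borel snd)"
  then have [measurable]: "B \<in> sets borel" by simp
  have "emeasure (distr (cond_normal_law \<mu> \<beta> v) borel snd) B =
      (\<integral>\<^sup>+x. emeasure (normal_kernel \<beta> v x) (snd -` B) \<partial>\<mu>)"
    by (simp add: emeasure_distr emeasure_cond_normal_law snd_vimage_in_sets_borel)
  also have "\<dots> = (\<integral>\<^sup>+x. indicator B x \<partial>\<mu>)"
    by (simp add: emeasure_snd_vimage_normal_kernel[of v, OF v_pos])
  also have "\<dots> = emeasure \<mu> B"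
    using sets_\<mu> by simp
  finally show "emeasure (distr (cond_normal_law \<mu> \<beta> v) borel snd) B = emeasure \<mu> B" .
qed (simp add: sets_\<mu>)

lemma integral_snd_cond_normal_law:
  fixes f :: "real \<Rightarrow> real" assumes [measurable]: "f \<in> borel_measurable borel"
  shows "(\<integral>z. f (snd z) \<partial>cond_normal_law \<mu> \<beta> v) = (\<integral>x. f x \<partial>\<mu>)"
  using integral_distr[of snd "cond_normal_law \<mu> \<beta> v" borel f] by (simp add: distr_snd_cond_normal_law)

lemma integrable_snd_cond_normal_law:
  fixes f :: "real \<Rightarrow> real" assumes [measurable]: "f \<in> borel_measurable borel"
  shows "integrable (cond_normal_law \<mu> \<beta> v) (\<lambda>z. f (snd z)) \<longleftrightarrow> integrable \<mu> f"
  using integrable_distr_eq[of snd "cond_normal_law \<mu> \<beta> v" borel f] by (simp add: distr_snd_cond_normal_law)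

lemma cond_normal_law_density_lborel:
  assumes \<mu>: "\<mu> = density lborel g" and [measurable]: "g \<in> borel_measurable borel"
  shows "cond_normal_law \<mu> \<beta> v =
    density lborel (\<lambda>z. g (snd z) * ennreal (normal_density (snd z * \<beta>) (sqrt (v (snd z))) (fst z)))"
    (is "_ = density lborel ?f")
proof (rule measure_eqI)
  fix A assume "A \<in> sets (cond_normal_law \<mu> \<beta> v)"
  then have A [measurable]: "A \<in> sets borel" by simp
  have [measurable]: "?f \<in> borel_measurable borel"
    unfolding normal_density_def by measurable
  have "emeasure (cond_normal_law \<mu> \<beta> v) A = (\<integral>\<^sup>+x. g x * emeasure (normal_kernel \<beta> v x) A \<partial>lborel)"
    using measurable_emeasure_kernel[OF normal_kernel_in_subprob_algebra A]
    unfolding emeasure_cond_normal_law[OF A]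
    by (simp add: \<mu> nn_integral_density measurable_cong_sets[OF sets_\<mu> refl])
  also have "\<dots> = (\<integral>\<^sup>+x. \<integral>\<^sup>+y. ?f (y, x) * indicator A (y, x) \<partial>lborel \<partial>lborel)"
    by (intro nn_integral_cong) (simp add: emeasure_normal_kernel nn_integral_cmult mult.assoc)
  also have "\<dots> = (\<integral>\<^sup>+z. ?f z * indicator A z \<partial>(lborel \<Otimes>\<^sub>M lborel))"
    by (rule lborel_pair.nn_integral_snd) (simp add: lborel_prod)
  also have "\<dots> = emeasure (density lborel ?f) A"
    by (simp add: lborel_prod emeasure_density)
  finally show "emeasure (cond_normal_law \<mu> \<beta> v) A = emeasure (density lborel ?f) A" .
qed simp

end

lemma nn_integral_snd_mult_normal_kernel:
  assumes [measurable]: "h \<in> borel_measurable borel" "f \<in> borel_measurable borel"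
  shows "(\<integral>\<^sup>+z. h (snd z) * f z \<partial>normal_kernel \<beta> v x) = h x * (\<integral>\<^sup>+z. f z \<partial>normal_kernel \<beta> v x)"
  by (simp add: nn_integral_normal_kernel nn_integral_cmult[symmetric] ac_simps)

lemma density_snd_cond_normal_law:
  assumes [measurable]: "v \<in> borel_measurable borel" "h \<in> borel_measurable borel"
    and v_pos: "\<And>x. 0 < v x" and sets_\<mu>: "sets \<mu> = sets borel"
  shows "density (cond_normal_law \<mu> \<beta> v) (\<lambda>z. h (snd z)) = cond_normal_law (density \<mu> h) \<beta> v"
proof (rule measure_eqI)
  have sets_h: "sets (density \<mu> h) = sets borel"
    using sets_\<mu> by simp
  fix A assume "A \<in> sets (density (cond_normal_law \<mu> \<beta> v) (\<lambda>z. h (snd z)))"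
  then have A [measurable]: "A \<in> sets borel"
    using sets_\<mu> v_pos by simp
  have sets_P: "sets (cond_normal_law \<mu> \<beta> v) = sets borel"
    using sets_\<mu> v_pos by simp
  have "emeasure (density (cond_normal_law \<mu> \<beta> v) (\<lambda>z. h (snd z))) A =
      (\<integral>\<^sup>+z. h (snd z) * indicator A z \<partial>cond_normal_law \<mu> \<beta> v)"
    by (rule emeasure_density) (simp_all add: measurable_cong_sets[OF sets_P refl] sets_P)
  also have "\<dots> = (\<integral>\<^sup>+x. \<integral>\<^sup>+z. h (snd z) * indicator A z \<partial>normal_kernel \<beta> v x \<partial>\<mu>)"
    unfolding cond_normal_law_eq_bind
    by (rule nn_integral_bind[OF _ normal_kernel_measurable[OF assms(1) v_pos sets_\<mu>]]) simp
  also have "\<dots> = (\<integral>\<^sup>+x. h x * emeasure (normal_kernel \<beta> v x) A \<partial>\<mu>)"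
    by (simp add: nn_integral_snd_mult_normal_kernel)
  also have "\<dots> = emeasure (cond_normal_law (density \<mu> h) \<beta> v) A"
    using measurable_emeasure_kernel[OF normal_kernel_in_subprob_algebra[OF assms(1) v_pos sets_\<mu>] A]
    unfolding emeasure_cond_normal_law[OF assms(1) v_pos sets_h A]
    by (subst nn_integral_density) (simp_all add: measurable_cong_sets[OF sets_\<mu> refl])
  finally show "emeasure (density (cond_normal_law \<mu> \<beta> v) (\<lambda>z. h (snd z))) A =
      emeasure (cond_normal_law (density \<mu> h) \<beta> v) A" .
qed (use sets_\<mu> v_pos in simp)

lemma cond_normal_law_cong_AE:
  assumes [measurable]: "v \<in> borel_measurable borel" "w \<in> borel_measurable borel"
    and "\<And>x. 0 < v x" "\<And>x. 0 < w x" and "sets \<mu> = sets borel"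
    and "AE x in \<mu>. v x = w x"
  shows "cond_normal_law \<mu> \<beta> v = cond_normal_law \<mu> \<beta> w"
  unfolding cond_normal_law_eq_bind
proof (rule bind_cong_AE[OF refl])
  show "normal_kernel \<beta> v \<in> measurable \<mu> (subprob_algebra borel)"
       "normal_kernel \<beta> w \<in> measurable \<mu> (subprob_algebra borel)"
    using normal_kernel_measurable assms by blast+
  show "AE x in \<mu>. normal_kernel \<beta> v x = normal_kernel \<beta> w x"
    using assms(6) by eventually_elim (simp add: normal_kernel_def)
qed

lemma (in prob_space) KL_divergence_conditional:
  assumes "1 < b" and A: "A \<in> events" and "0 < prob A"
  defines "Q \<equiv> density M (\<lambda>x. ennreal (indicator A x / prob A))"
  shows "prob_space Q" and "absolutely_continuous M Q"
    and "integrable Q (entropy_density b M Q)" and "KL_divergence b M Q = - log b (prob A)"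
proof -
  define f where "f x = indicator A x / prob A" for x
  have f [measurable]: "f \<in> borel_measurable M"
    unfolding f_def using A by measurable
  have Q: "Q = density M f"
    by (simp add: Q_def f_def)
  show "prob_space Q"
  proof
    have "emeasure Q (space Q) = (\<integral>\<^sup>+x. ennreal (f x) * indicator (space M) x \<partial>M)"
      unfolding Q by (simp add: emeasure_density)
    also have "\<dots> = (\<integral>\<^sup>+x. ennreal (1 / prob A) * indicator A x \<partial>M)"
      using sets.sets_into_space[OF A]
      by (intro nn_integral_cong) (auto simp: f_def split: split_indicator)
    also have "\<dots> = 1"
      using A \<open>0 < prob A\<close> by (simp add: nn_integral_cmult_indicator emeasure_eq_measure ennreal_mult''[symmetric])
    finally show "emeasure Q (space Q) = 1" .
  qed
  then interpret Q: prob_space Q .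
  show "absolutely_continuous M Q"
    unfolding Q by (rule absolutely_continuousI_density) simp
  have "AE x in M. ennreal (f x) = RN_deriv M Q x"
    by (rule RN_deriv_unique) (simp_all add: Q)
  then have "AE x in M. enn2real (RN_deriv M Q x) = f x"
    by eventually_elim (metis enn2real_ennreal f_def divide_nonneg_nonneg indicator_pos_le measure_nonneg)
  then have "AE x in M. 0 < ennreal (f x) \<longrightarrow> entropy_density b M Q x = log b (1 / prob A)"
    by eventually_elim (auto simp: entropy_density_def f_def split: split_indicator)
  then have "AE x in Q. entropy_density b M Q x = log b (1 / prob A)"
    using AE_density[of "\<lambda>x. ennreal (f x)" M "\<lambda>x. entropy_density b M Q x = log b (1 / prob A)"]
    unfolding Q by simp
  moreover have "entropy_density b M Q \<in> borel_measurable Q"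
    using measurable_entropy_density[of b M Q] by (simp add: measurable_cong_sets[of Q M] Q)
  ultimately show "integrable Q (entropy_density b M Q)"
    by (subst integrable_cong_AE) auto
  have "KL_divergence b M Q = (\<integral>x. f x * log b (f x) \<partial>M)"
    unfolding Q using \<open>1 < b\<close> by (rule KL_density[OF _ f]) (auto simp: f_def)
  also have "\<dots> = (\<integral>x. indicator A x * (log b (1 / prob A) / prob A) \<partial>M)"
    by (intro Bochner_Integration.integral_cong) (auto simp: f_def split: split_indicator)
  also have "\<dots> = - log b (prob A)"
    using A \<open>0 < prob A\<close> \<open>1 < b\<close> by (simp add: log_divide)
  finally show "KL_divergence b M Q = - log b (prob A)" .
qed

definition unif_density :: "real \<Rightarrow> real \<Rightarrow> real \<Rightarrow> real" where
  "unif_density l u x = indicator {l..u} x / (u - l)"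

lemma unif_density_nonneg: "l \<le> u \<Longrightarrow> 0 \<le> unif_density l u x"
  by (simp add: unif_density_def)

lemma borel_measurable_unif_density [measurable]: "unif_density l u \<in> borel_measurable borel"
  unfolding unif_density_def by measurable

lemma unif_density_quadratic:
  fixes l u a0 a1 a2 :: real
  assumes "l < u"
  shows "integrable lborel (\<lambda>x. unif_density l u x * (a0 + a1 * x + a2 * x\<^sup>2))"
    and "(\<integral>x. unif_density l u x * (a0 + a1 * x + a2 * x\<^sup>2) \<partial>lborel) =
      a0 + a1 * ((l + u) / 2) + a2 * ((l\<^sup>2 + l * u + u\<^sup>2) / 3)"
proof -
  define F where "F t = a0 * t + a1 * t\<^sup>2 / 2 + a2 * t ^ 3 / 3" for t :: real
  have cont: "continuous_on {l..u} (\<lambda>x. a0 + a1 * x + a2 * x\<^sup>2)"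
    by (intro continuous_intros)
  have int: "integrable lborel (\<lambda>x. indicator {l..u} x * (a0 + a1 * x + a2 * x\<^sup>2))"
    using borel_integrable_atLeastAtMost'[OF cont] by (simp add: set_integrable_def)
  then show "integrable lborel (\<lambda>x. unif_density l u x * (a0 + a1 * x + a2 * x\<^sup>2))"
    unfolding unif_density_def by (simp add: integrable_divide_zero)
  have "(\<integral>x. indicator {l..u} x *\<^sub>R (a0 + a1 * x + a2 * x\<^sup>2) \<partial>lborel) = F u - F l"
  proof (rule integral_FTC_atLeastAtMost[OF less_imp_le[OF assms] _ cont])
    fix x
    show "(F has_vector_derivative a0 + a1 * x + a2 * x\<^sup>2) (at x within {l..u})"
      unfolding F_def has_real_derivative_iff_has_vector_derivative[symmetric]
      by (auto intro!: derivative_eq_intros simp: power2_eq_square)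
  qed
  moreover have "(F u - F l) / (u - l) = a0 + a1 * ((l + u) / 2) + a2 * ((l\<^sup>2 + l * u + u\<^sup>2) / 3)"
    using assms by (simp add: F_def field_simps power2_eq_square power3_eq_cube)
  ultimately show "(\<integral>x. unif_density l u x * (a0 + a1 * x + a2 * x\<^sup>2) \<partial>lborel) =
      a0 + a1 * ((l + u) / 2) + a2 * ((l\<^sup>2 + l * u + u\<^sup>2) / 3)"
    unfolding unif_density_def by simp
qed

definition three_block_density :: "real \<Rightarrow> real \<Rightarrow> real \<Rightarrow> real \<Rightarrow> real" where
  "three_block_density c L p x =
     (1 - 2 * p) * unif_density c (2 * c) x + p * unif_density (- 2 * c) (- c) x
       + p * unif_density (- 2 * c * L) (- c * L) x"

lemma borel_measurable_three_block_density [measurable]: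
  "three_block_density c L p \<in> borel_measurable borel"
  unfolding three_block_density_def by measurable

lemma three_block_quadratic:
  fixes f :: "real \<Rightarrow> real"
  assumes c: "0 < c" and L: "2 < L" and p: "0 \<le> p" "p \<le> 1 / 2"
    and [measurable]: "f \<in> borel_measurable borel"
    and fA: "\<And>x. c \<le> x \<Longrightarrow> x \<le> 2 * c \<Longrightarrow> f x = a0 + a1 * x + a2 * x\<^sup>2"
    and fB: "\<And>x. - 2 * c \<le> x \<Longrightarrow> x \<le> - c \<Longrightarrow> f x = b0 + b1 * x + b2 * x\<^sup>2"
    and fC: "\<And>x. - 2 * c * L \<le> x \<Longrightarrow> x \<le> - c * L \<Longrightarrow> f x = d0 + d1 * x + d2 * x\<^sup>2"
  shows "integrable (density lborel (three_block_density c L p)) f"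
    and "(\<integral>x. f x \<partial>density lborel (three_block_density c L p)) =
      (1 - 2 * p) * (a0 + a1 * (3 * c / 2) + a2 * (7 * c\<^sup>2 / 3))
        + p * (b0 - b1 * (3 * c / 2) + b2 * (7 * c\<^sup>2 / 3))
        + p * (d0 - d1 * (3 * c * L / 2) + d2 * (7 * c\<^sup>2 * L\<^sup>2 / 3))"
proof -
  define qA where "qA x = unif_density c (2 * c) x * (a0 + a1 * x + a2 * x\<^sup>2)" for x
  define qB where "qB x = unif_density (- 2 * c) (- c) x * (b0 + b1 * x + b2 * x\<^sup>2)" for x
  define qC where "qC x = unif_density (- 2 * c * L) (- c * L) x * (d0 + d1 * x + d2 * x\<^sup>2)" for x
  have blocks: "c < 2 * c" "- 2 * c < - c" "- 2 * c * L < - c * L" "- c * L < - 2 * c"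
    using c L by auto
  have split: "three_block_density c L p x * f x = (1 - 2 * p) * qA x + p * qB x + p * qC x" for x
  proof -
    consider "x \<in> {c..2 * c}" "x \<notin> {- 2 * c..- c}" "x \<notin> {- 2 * c * L..- c * L}"
      | "x \<in> {- 2 * c..- c}" "x \<notin> {c..2 * c}" "x \<notin> {- 2 * c * L..- c * L}"
      | "x \<in> {- 2 * c * L..- c * L}" "x \<notin> {c..2 * c}" "x \<notin> {- 2 * c..- c}"
      | "x \<notin> {c..2 * c}" "x \<notin> {- 2 * c..- c}" "x \<notin> {- 2 * c * L..- c * L}"
      using blocks by (auto; linarith)
    then show ?thesis
      using fA[of x] fB[of x] fC[of x]
      by cases (simp_all add: three_block_density_def qA_def qB_def qC_def unif_density_def)
  qed
  note A = unif_density_quadratic[OF blocks(1), of a0 a1 a2, folded qA_def]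
    and B = unif_density_quadratic[OF blocks(2), of b0 b1 b2, folded qB_def]
    and C = unif_density_quadratic[OF blocks(3), of d0 d1 d2, folded qC_def]
  have nonneg: "AE x in lborel. 0 \<le> three_block_density c L p x"
    using blocks p by (auto simp: three_block_density_def unif_density_nonneg)
  have "integrable lborel (\<lambda>x. three_block_density c L p x * f x)"
    unfolding split using A(1) B(1) C(1) by auto
  then show "integrable (density lborel (three_block_density c L p)) f"
    using nonneg by (subst integrable_density) auto
  have "(\<integral>x. f x \<partial>density lborel (three_block_density c L p)) =
      (\<integral>x. (1 - 2 * p) * qA x + p * qB x + p * qC x \<partial>lborel)"
    using nonneg by (subst integral_density) (auto simp: split)
  also have "\<dots> = (1 - 2 * p) * (\<integral>x. qA x \<partial>lborel) + p * (\<integral>x. qB x \<partial>lborel) + p * (\<integral>x. qC x \<partial>lborel)"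
    using A(1) B(1) C(1) by simp
  also have "\<dots> = (1 - 2 * p) * (a0 + a1 * (3 * c / 2) + a2 * (7 * c\<^sup>2 / 3))
        + p * (b0 - b1 * (3 * c / 2) + b2 * (7 * c\<^sup>2 / 3))
        + p * (d0 - d1 * (3 * c * L / 2) + d2 * (7 * c\<^sup>2 * L\<^sup>2 / 3))"
    unfolding A(2) B(2) C(2) by (simp add: field_simps power2_eq_square)
  finally show "(\<integral>x. f x \<partial>density lborel (three_block_density c L p)) = \<dots>" .
qed

lemma prob_space_three_block:
  assumes "0 < c" and "2 < L" and "0 \<le> p" "p \<le> 1 / 2"
  shows "prob_space (density lborel (three_block_density c L p))"
proof
  have one: "integrable (density lborel (three_block_density c L p)) (\<lambda>_. 1 :: real)"
    "(\<integral>x. 1 \<partial>density lborel (three_block_density c L p)) = (1 :: real)"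
    using three_block_quadratic[OF assms, of "\<lambda>_. 1" 1 0 0 1 0 0 1 0 0] by simp_all
  have nonneg: "AE x in lborel. 0 \<le> three_block_density c L p x"
    using assms by (auto simp: three_block_density_def unif_density_nonneg)
  have "integrable lborel (three_block_density c L p)"
    using one(1) nonneg by (subst (asm) integrable_density) auto
  moreover have "(\<integral>x. three_block_density c L p x \<partial>lborel) = 1"
    using one(2) nonneg by (subst (asm) integral_density) auto
  ultimately have "(\<integral>\<^sup>+x. ennreal (three_block_density c L p x) \<partial>lborel) = 1"
    using nonneg by (subst nn_integral_eq_integral) auto
  then show "emeasure (density lborel (three_block_density c L p))
      (space (density lborel (three_block_density c L p))) = 1"
    by (simp add: emeasure_density)
qed

lemma is_argmin_on_iff_strict_min:
  assumes "g0 \<in> S" and "\<And>\<gamma>. \<gamma> \<in> S \<Longrightarrow> \<gamma> \<noteq> g0 \<Longrightarrow> F g0 < F \<gamma>"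
  shows "is_argmin_on F S g \<longleftrightarrow> g = g0"
  using assms unfolding is_argmin_on_def by (metis less_le_not_le order_refl)

lemma ln_add_divide_strict_min:
  fixes a t :: real
  assumes "0 < a" "0 < t" "t \<noteq> a"
  shows "ln a + 1 < ln t + a / t"
proof -
  have "ln (a / t) < a / t - 1"
    using ln_le_minus_one[of "a / t"] ln_eq_minus_one[of "a / t"] assms by fastforce
  then show ?thesis
    using assms by (simp add: ln_div)
qed

lemma ln_add_divide_min:
  fixes a t :: real
  assumes "0 < a" "0 < t"
  shows "ln a + 1 \<le> ln t + a / t"
  using assms ln_add_divide_strict_min[OF assms] by (cases "t = a") auto

definition gamma_star :: "real \<Rightarrow> real \<Rightarrow> real \<times> real" where
  "gamma_star p \<kappa> = (\<kappa>, \<kappa> * (1 + p) / 2)"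

definition eqml_three_block :: "real \<Rightarrow> real \<Rightarrow> real \<times> real \<Rightarrow> real" where
  "eqml_three_block p \<kappa> \<gamma> =
     (1 - 2 * p) * (ln (fst \<gamma>) + \<kappa> / fst \<gamma>) + p * (ln (snd \<gamma>) + \<kappa> / snd \<gamma>)
       + p * (ln (snd \<gamma>) + \<kappa> * p / snd \<gamma>)"

definition gee_three_block :: "real \<Rightarrow> real \<Rightarrow> real \<times> real \<Rightarrow> real" where
  "gee_three_block p \<kappa> \<gamma> =
     (1 - 2 * p) * (fst \<gamma> - \<kappa>)\<^sup>2 + p * (snd \<gamma> - \<kappa>)\<^sup>2 + p * (snd \<gamma> - \<kappa> * p)\<^sup>2"

context
  fixes p \<kappa> :: real
  assumes p: "0 < p" "p < 1 / 2" and \<kappa>: "0 < \<kappa>"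
begin

lemma gamma_star_in_Gamma: "gamma_star p \<kappa> \<in> Gamma"
  using p \<kappa> by (simp add: gamma_star_def Gamma_def)

lemma eqml_three_block_strict_min:
  assumes "\<gamma> \<in> Gamma" "\<gamma> \<noteq> gamma_star p \<kappa>"
  shows "eqml_three_block p \<kappa> (gamma_star p \<kappa>) < eqml_three_block p \<kappa> \<gamma>"
proof -
  obtain a b where \<gamma>: "\<gamma> = (a, b)" and "0 < a" "0 < b"
    using assms(1) by (cases \<gamma>) (auto simp: Gamma_def)
  define m where "m = \<kappa> * (1 + p) / 2"
  have "0 < m"
    using p \<kappa> by (simp add: m_def)
  have lower: "ln \<kappa> + 1 \<le> ln a + \<kappa> / a" "ln m + 1 \<le> ln b + m / b"
    using ln_add_divide_min \<open>0 < a\<close> \<open>0 < b\<close> \<open>0 < m\<close> \<kappa> by auto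
  have "a \<noteq> \<kappa> \<or> b \<noteq> m"
    using assms(2) by (auto simp: \<gamma> gamma_star_def m_def)
  then have "(1 - 2 * p) * (ln \<kappa> + 1) + 2 * p * (ln m + 1) < (1 - 2 * p) * (ln a + \<kappa> / a) + 2 * p * (ln b + m / b)"
  proof
    assume "a \<noteq> \<kappa>"
    then have "ln \<kappa> + 1 < ln a + \<kappa> / a"
      using ln_add_divide_strict_min \<open>0 < a\<close> \<kappa> by blast
    then have "(1 - 2 * p) * (ln \<kappa> + 1) < (1 - 2 * p) * (ln a + \<kappa> / a)"
      using p by (intro mult_strict_left_mono) auto
    moreover have "2 * p * (ln m + 1) \<le> 2 * p * (ln b + m / b)"
      using lower(2) p by (intro mult_left_mono) auto
    ultimately show ?thesis
      by linarith
  next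
    assume "b \<noteq> m"
    then have "ln m + 1 < ln b + m / b"
      using ln_add_divide_strict_min \<open>0 < b\<close> \<open>0 < m\<close> by blast
    then have "2 * p * (ln m + 1) < 2 * p * (ln b + m / b)"
      using p by (intro mult_strict_left_mono) auto
    moreover have "(1 - 2 * p) * (ln \<kappa> + 1) \<le> (1 - 2 * p) * (ln a + \<kappa> / a)"
      using lower(1) p by (intro mult_left_mono) auto
    ultimately show ?thesis
      by linarith
  qed
  moreover have "eqml_three_block p \<kappa> (s, t) = (1 - 2 * p) * (ln s + \<kappa> / s) + 2 * p * (ln t + m / t)" for s t
    by (simp add: eqml_three_block_def m_def add_divide_distrib algebra_simps)
  moreover have "gamma_star p \<kappa> = (\<kappa>, m)"
    by (simp add: gamma_star_def m_def)
  ultimately show ?thesis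
    using \<kappa> \<open>0 < m\<close> by (simp add: \<gamma>)
qed

lemma gee_three_block_strict_min:
  assumes "\<gamma> \<noteq> gamma_star p \<kappa>"
  shows "gee_three_block p \<kappa> (gamma_star p \<kappa>) < gee_three_block p \<kappa> \<gamma>"
proof -
  obtain a b where \<gamma>: "\<gamma> = (a, b)"
    by fastforce
  have "gee_three_block p \<kappa> \<gamma> - gee_three_block p \<kappa> (gamma_star p \<kappa>) =
      (1 - 2 * p) * (a - \<kappa>)\<^sup>2 + 2 * p * (b - \<kappa> * (1 + p) / 2)\<^sup>2"
    by (simp add: gee_three_block_def gamma_star_def \<gamma> field_simps power2_eq_square)
  moreover have "a \<noteq> \<kappa> \<or> b \<noteq> \<kappa> * (1 + p) / 2"
    using assms by (auto simp: \<gamma> gamma_star_def)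
  then have "0 < (1 - 2 * p) * (a - \<kappa>)\<^sup>2 + 2 * p * (b - \<kappa> * (1 + p) / 2)\<^sup>2"
    using p by (auto intro: add_pos_nonneg add_nonneg_pos)
  ultimately show ?thesis
    by simp
qed

end

definition sandwich_three_block :: "real \<Rightarrow> real \<Rightarrow> real \<Rightarrow> real \<times> real \<Rightarrow> real" where
  "sandwich_three_block p \<kappa> r \<gamma> =
     (r * ((1 - 2 * p) / fst \<gamma> + (1 + p) / snd \<gamma>)) powi (-2)
       * (r * \<kappa> * ((1 - 2 * p) / (fst \<gamma>)\<^sup>2 + 2 * p / (snd \<gamma>)\<^sup>2))"

lemma sandwich_three_block_eq:
  assumes "r \<noteq> 0"
  shows "sandwich_three_block p \<kappa> r (a, b) =
    \<kappa> * ((1 - 2 * p) * (1 / a)\<^sup>2 + 2 * p * (1 / b)\<^sup>2) / (r * ((1 - 2 * p) * (1 / a) + (1 + p) * (1 / b))\<^sup>2)"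
  using assms by (simp add: sandwich_three_block_def power_int_minus power_mult_distrib power_divide
      divide_inverse power2_eq_square)

context
  fixes p \<kappa> r :: real
  assumes p: "0 < p" "p \<le> 1 / 100" and \<kappa>: "0 < \<kappa>" and r: "0 < r"
begin

lemma sandwich_three_block_lower_bound:
  assumes "\<gamma> \<in> Gamma"
  shows "\<kappa> * p / (r * (2 - p)) \<le> sandwich_three_block p \<kappa> r \<gamma>"
proof -
  obtain a b where \<gamma>: "\<gamma> = (a, b)" and "0 < a" "0 < b"
    using assms by (cases \<gamma>) (auto simp: Gamma_def)
  define u w where "u = 1 / a" and "w = 1 / b"
  define X Q where "X = (1 - 2 * p) * u + (1 + p) * w" and "Q = (1 - 2 * p) * u\<^sup>2 + 2 * p * w\<^sup>2"
  have "0 < u" "0 < w" "0 < X"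
    using \<open>0 < a\<close> \<open>0 < b\<close> p by (auto simp: u_def w_def X_def intro!: add_nonneg_pos)
  have cauchy_schwarz: "X\<^sup>2 \<le> (2 - p) * ((1 - 2 * p) * u\<^sup>2 + (1 + p) * w\<^sup>2)"
  proof -
    have "0 \<le> (1 - 2 * p) * (1 + p) * (u - w)\<^sup>2"
      using p by simp
    then show ?thesis
      by (simp add: X_def power2_eq_square algebra_simps)
  qed
  have "Q - p * ((1 - 2 * p) * u\<^sup>2 + (1 + p) * w\<^sup>2) = (1 - p) * ((1 - 2 * p) * u\<^sup>2 + p * w\<^sup>2)"
    by (simp add: Q_def algebra_simps power2_eq_square)
  moreover have "0 \<le> (1 - p) * ((1 - 2 * p) * u\<^sup>2 + p * w\<^sup>2)"
    using p by simp
  ultimately have "p * ((1 - 2 * p) * u\<^sup>2 + (1 + p) * w\<^sup>2) \<le> Q"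
    by linarith
  then have "(2 - p) * (p * ((1 - 2 * p) * u\<^sup>2 + (1 + p) * w\<^sup>2)) \<le> (2 - p) * Q"
    using p by (intro mult_left_mono) auto
  moreover have "p * X\<^sup>2 \<le> p * ((2 - p) * ((1 - 2 * p) * u\<^sup>2 + (1 + p) * w\<^sup>2))"
    using cauchy_schwarz p by (intro mult_left_mono) auto
  ultimately have "p * X\<^sup>2 \<le> (2 - p) * Q"
    by (simp add: algebra_simps)
  then have "\<kappa> * (p * X\<^sup>2) / (r * (2 - p) * X\<^sup>2) \<le> \<kappa> * ((2 - p) * Q) / (r * (2 - p) * X\<^sup>2)"
    using \<kappa> r p by (intro divide_right_mono mult_left_mono) auto
  then have "\<kappa> * p / (r * (2 - p)) \<le> \<kappa> * Q / (r * X\<^sup>2)"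
    using p \<open>0 < X\<close> by simp
  then show ?thesis
    using r by (simp add: \<gamma> sandwich_three_block_eq u_def[symmetric] w_def[symmetric] X_def[symmetric] Q_def[symmetric])
qed

lemma sandwich_three_block_upper_bound:
  "sandwich_three_block p \<kappa> r (\<kappa>, 2 * \<kappa> * p / (1 + p)) \<le> 2 * p * \<kappa> / r"
proof -
  define D where "D = (1 - 2 * p) + (1 + p)\<^sup>2 / (2 * p)"
  have "1 / (2 * p) \<le> (1 + p)\<^sup>2 / (2 * p)"
    using p one_le_power[of "1 + p" 2] by (intro divide_right_mono) auto
  then have D: "1 / (2 * p) \<le> D"
    using p by (simp add: D_def)
  have "0 < 1 / (2 * p)"
    using p by simp
  then have "0 < D"
    using D by linarith
  have X: "(1 - 2 * p) * (1 / \<kappa>) + (1 + p) * (1 / (2 * \<kappa> * p / (1 + p))) = D / \<kappa>"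
    and Q: "(1 - 2 * p) * (1 / \<kappa>)\<^sup>2 + 2 * p * (1 / (2 * \<kappa> * p / (1 + p)))\<^sup>2 = D / \<kappa>\<^sup>2"
    unfolding D_def using p \<kappa> by (simp_all add: divide_simps) (simp_all add: algebra_simps power2_eq_square)
  have "sandwich_three_block p \<kappa> r (\<kappa>, 2 * \<kappa> * p / (1 + p)) = \<kappa> / (r * D)"
    unfolding sandwich_three_block_eq[OF less_imp_neq[OF r, symmetric]] X Q
    using \<open>0 < D\<close> \<kappa> r by (simp add: field_simps power2_eq_square)
  also have "\<dots> \<le> \<kappa> / (r * (1 / (2 * p)))"
    using D \<open>0 < D\<close> p \<kappa> r by (intro divide_left_mono mult_left_mono mult_pos_pos) auto
  finally show ?thesis
    by (simp add: ac_simps)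
qed

lemma sandwich_three_block_gamma_star:
  "\<kappa> / (18 * r) \<le> sandwich_three_block p \<kappa> r (gamma_star p \<kappa>)"
proof -
  define E where "E = (1 - 2 * p) + 8 * p / (1 + p)\<^sup>2"
  have X: "(1 - 2 * p) * (1 / \<kappa>) + (1 + p) * (1 / (\<kappa> * (1 + p) / 2)) = (3 - 2 * p) / \<kappa>"
    using p \<kappa> by (simp add: divide_simps) (simp add: algebra_simps)
  have Q: "(1 - 2 * p) * (1 / \<kappa>)\<^sup>2 + 2 * p * (1 / (\<kappa> * (1 + p) / 2))\<^sup>2 = E / \<kappa>\<^sup>2"
    unfolding E_def using p \<kappa> by (simp add: divide_simps)
  have "0 \<le> 8 * p / (1 + p)\<^sup>2"
    using p by simp
  then have E: "1 / 2 \<le> E"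
    using p unfolding E_def by linarith
  have "(3 - 2 * p)\<^sup>2 \<le> 3\<^sup>2"
    using p by (intro power_mono) auto
  then have "\<kappa> / (18 * r) \<le> \<kappa> * E / (r * (3 - 2 * p)\<^sup>2)"
    using E p \<kappa> r by (simp add: field_simps)
  also have "\<dots> = sandwich_three_block p \<kappa> r (gamma_star p \<kappa>)"
    unfolding gamma_star_def sandwich_three_block_eq[OF less_imp_neq[OF r, symmetric]] fst_conv snd_conv X Q
    using p \<kappa> r by (simp add: field_simps power2_eq_square)
  finally show ?thesis .
qed

lemma sandwich_three_block_ratio:
  "1 / (36 * p) \<le> sandwich_three_block p \<kappa> r (gamma_star p \<kappa>) / (INF \<gamma>\<in>Gamma. sandwich_three_block p \<kappa> r \<gamma>)"
proof -
  let ?S = "sandwich_three_block p \<kappa> r" and ?I = "INF \<gamma>\<in>Gamma. sandwich_three_block p \<kappa> r \<gamma>"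
  have mem: "(\<kappa>, 2 * \<kappa> * p / (1 + p)) \<in> Gamma"
    using p \<kappa> by (simp add: Gamma_def)
  moreover have "bdd_below (?S ` Gamma)"
    using sandwich_three_block_lower_bound by (rule bdd_belowI2)
  ultimately have "?I \<le> ?S (\<kappa>, 2 * \<kappa> * p / (1 + p))"
    by (rule cINF_lower[rotated])
  then have "?I \<le> 2 * p * \<kappa> / r"
    using sandwich_three_block_upper_bound by linarith
  moreover have "0 < ?I"
  proof -
    have "0 < \<kappa> * p / (r * (2 - p))"
      using p \<kappa> r by simp
    also have "\<dots> \<le> ?I"
      using sandwich_three_block_lower_bound mem by (intro cINF_greatest) auto
    finally show ?thesis .
  qed
  moreover have "0 \<le> ?S (gamma_star p \<kappa>)"
    using sandwich_three_block_gamma_star \<kappa> r by (meson divide_nonneg_pos less_imp_le mult_pos_pos order_trans zero_less_numeral)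
  ultimately have "?S (gamma_star p \<kappa>) / (2 * p * \<kappa> / r) \<le> ?S (gamma_star p \<kappa>) / ?I"
    using p \<kappa> r by (intro divide_left_mono) auto
  moreover have "1 / (36 * p) = (\<kappa> / (18 * r)) / (2 * p * \<kappa> / r)"
    using p \<kappa> r by (simp add: field_simps)
  moreover have "\<dots> \<le> ?S (gamma_star p \<kappa>) / (2 * p * \<kappa> / r)"
    using sandwich_three_block_gamma_star p \<kappa> r by (intro divide_right_mono) auto
  ultimately show ?thesis
    by linarith
qed

end

lemma borel_measurable_nu [measurable]: "nu \<gamma> \<in> borel_measurable borel"
  unfolding nu_def by measurable

locale three_block_design =
  fixes \<beta> c L p \<kappa> :: real
  assumes c_pos: "0 < c" and p_pos: "0 < p" and p_small: "p \<le> 1 / 100"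
    and L_pos: "0 < L" and p_L: "p * L\<^sup>2 = 1" and \<kappa>_pos: "0 < \<kappa>"
begin

definition X_law :: "real measure" where
  "X_law = density lborel (three_block_density c L p)"

definition cond_var :: "real \<Rightarrow> real" where
  "cond_var x = \<kappa> * (if - 2 * c \<le> x then 1 else p)"

abbreviation joint_law :: "(real \<times> real) measure" where
  "joint_law \<equiv> cond_normal_law X_law \<beta> cond_var"

lemma L_square: "L\<^sup>2 = 1 / p"
  using p_L p_pos by (simp add: field_simps)

lemma L_gt_2: "2 < L"
proof -
  have "100 \<le> 1 / p"
    using p_pos p_small by (simp add: field_simps)
  then have "2\<^sup>2 < L\<^sup>2"
    by (simp add: L_square)
  then show ?thesis
    using power_less_imp_less_base L_pos by fastforce
qed

lemma p_less_half: "p < 1 / 2"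
  using p_small by simp

lemma sets_X_law [simp]: "sets X_law = sets borel"
  by (simp add: X_law_def)

lemma prob_space_X_law: "prob_space X_law"
  unfolding X_law_def using c_pos L_gt_2 p_pos p_less_half by (intro prob_space_three_block) auto

lemma cond_var_measurable [measurable]: "cond_var \<in> borel_measurable borel"
  unfolding cond_var_def by measurable

lemma cond_var_pos: "0 < cond_var x"
  using \<kappa>_pos p_pos by (simp add: cond_var_def)

lemmas X_law_quadratic =
  three_block_quadratic[OF c_pos L_gt_2 less_imp_le[OF p_pos] less_imp_le[OF p_less_half], folded X_law_def]

lemma cond_var_near: "- 2 * c \<le> x \<Longrightarrow> cond_var x = \<kappa>"
  by (simp add: cond_var_def)

lemma far_lt_near: "x \<le> - c * L \<Longrightarrow> x < - 2 * c"
  using mult_strict_left_mono[OF L_gt_2 c_pos] by linarith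

lemma cond_var_far: "x \<le> - c * L \<Longrightarrow> cond_var x = \<kappa> * p"
  by (drule far_lt_near) (simp add: cond_var_def)

lemma nu_bulk: "c \<le> x \<Longrightarrow> nu \<gamma> x = fst \<gamma>"
  using c_pos by (simp add: nu_def)

lemma nu_near: "x \<le> - c \<Longrightarrow> nu \<gamma> x = snd \<gamma>"
  using c_pos by (simp add: nu_def)

lemma nu_far: "x \<le> - c * L \<Longrightarrow> nu \<gamma> x = snd \<gamma>"
  using mult_pos_pos[OF c_pos L_pos] by (simp add: nu_def)

lemma X_law_blockwise_const:
  assumes [measurable]: "f \<in> borel_measurable borel"
    and "\<And>x. c \<le> x \<Longrightarrow> x \<le> 2 * c \<Longrightarrow> f x = kA"
    and "\<And>x. - 2 * c \<le> x \<Longrightarrow> x \<le> - c \<Longrightarrow> f x = kB"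
    and "\<And>x. - 2 * c * L \<le> x \<Longrightarrow> x \<le> - c * L \<Longrightarrow> f x = kC"
  shows "integrable X_law f" and "(\<integral>x. f x \<partial>X_law) = (1 - 2 * p) * kA + p * kB + p * kC"
  using X_law_quadratic[of f kA 0 0 kB 0 0 kC 0 0] assms by simp_all

lemma X_law_blockwise_square:
  assumes [measurable]: "f \<in> borel_measurable borel"
    and "\<And>x. c \<le> x \<Longrightarrow> x \<le> 2 * c \<Longrightarrow> f x = kA * x\<^sup>2"
    and "\<And>x. - 2 * c \<le> x \<Longrightarrow> x \<le> - c \<Longrightarrow> f x = kB * x\<^sup>2"
    and "\<And>x. - 2 * c * L \<le> x \<Longrightarrow> x \<le> - c * L \<Longrightarrow> f x = kC * x\<^sup>2"
  shows "integrable X_law f" and "(\<integral>x. f x \<partial>X_law) = 7 * c\<^sup>2 / 3 * ((1 - 2 * p) * kA + p * kB + kC)"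
proof -
  note sq = X_law_quadratic[of f 0 0 kA 0 0 kB 0 0 kC]
  show "integrable X_law f"
    using sq(1) assms by simp
  have "(\<integral>x. f x \<partial>X_law) = (1 - 2 * p) * (0 + 0 * (3 * c / 2) + kA * (7 * c\<^sup>2 / 3))
      + p * (0 - 0 * (3 * c / 2) + kB * (7 * c\<^sup>2 / 3)) + p * (0 - 0 * (3 * c * L / 2) + kC * (7 * c\<^sup>2 * L\<^sup>2 / 3))"
    using sq(2) assms by simp
  also have "\<dots> = 7 * c\<^sup>2 / 3 * ((1 - 2 * p) * kA + p * kB + kC)"
    using p_pos unfolding L_square by (simp add: field_simps)
  finally show "(\<integral>x. f x \<partial>X_law) = 7 * c\<^sup>2 / 3 * ((1 - 2 * p) * kA + p * kB + kC)" .
qed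

lemma integrable_cond_var: "integrable X_law cond_var"
  and integral_cond_var: "(\<integral>x. cond_var x \<partial>X_law) = \<kappa> * (1 - p + p\<^sup>2)"
proof -
  have "c \<le> x \<Longrightarrow> cond_var x = \<kappa>" "x \<le> - c \<Longrightarrow> - 2 * c \<le> x \<Longrightarrow> cond_var x = \<kappa>"
    "x \<le> - c * L \<Longrightarrow> cond_var x = \<kappa> * p" for x
    using c_pos by (simp_all add: cond_var_near cond_var_far)
  note const = X_law_blockwise_const[of cond_var \<kappa> \<kappa> "\<kappa> * p", OF cond_var_measurable this]
  show "integrable X_law cond_var"
    using const(1) .
  show "(\<integral>x. cond_var x \<partial>X_law) = \<kappa> * (1 - p + p\<^sup>2)"
    using const(2) by (simp add: algebra_simps power2_eq_square)
qed

lemma het_model_X_law: "het_model X_law cond_var"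
  unfolding het_model_def using prob_space_X_law cond_var_pos integrable_cond_var by auto

lemma integrable_cond_var_X2: "integrable X_law (\<lambda>x. cond_var x * x\<^sup>2)"
  using c_pos by (intro X_law_blockwise_square(1)[of _ \<kappa> \<kappa> "\<kappa> * p"]) (auto simp: cond_var_near cond_var_far)

lemma integrable_X2: "integrable X_law (\<lambda>x. x\<^sup>2)"
  by (intro X_law_blockwise_square(1)[of _ 1 1 1]) auto

lemma integral_X: "(\<integral>x. x \<partial>X_law) = 3 * c / 2 * (1 - 3 * p - p * L)"
proof -
  have "(\<integral>x. x \<partial>X_law) = (1 - 2 * p) * (0 + 1 * (3 * c / 2) + 0 * (7 * c\<^sup>2 / 3))
      + p * (0 - 1 * (3 * c / 2) + 0 * (7 * c\<^sup>2 / 3)) + p * (0 - 1 * (3 * c * L / 2) + 0 * (7 * c\<^sup>2 * L\<^sup>2 / 3))"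
    by (rule X_law_quadratic(2)) auto
  then show ?thesis
    by (simp add: field_simps)
qed

lemma variance_X:
  "(\<integral>x. (x - (\<integral>x. x \<partial>X_law))\<^sup>2 \<partial>X_law) = c\<^sup>2 * (7 / 3 * (2 - p) - 9 / 4 * (1 - 3 * p - p * L)\<^sup>2)"
proof -
  define m where "m = 3 * c / 2 * (1 - 3 * p - p * L)"
  have m2: "m\<^sup>2 = 9 / 4 * c\<^sup>2 * (1 - 3 * p - p * L)\<^sup>2"
    by (simp add: m_def power_mult_distrib power_divide)
  have "(\<integral>x. (x - m)\<^sup>2 \<partial>X_law) = (1 - 2 * p) * (m\<^sup>2 + (- 2 * m) * (3 * c / 2) + 1 * (7 * c\<^sup>2 / 3))
      + p * (m\<^sup>2 - (- 2 * m) * (3 * c / 2) + 1 * (7 * c\<^sup>2 / 3))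
      + p * (m\<^sup>2 - (- 2 * m) * (3 * c * L / 2) + 1 * (7 * c\<^sup>2 * L\<^sup>2 / 3))"
    by (rule X_law_quadratic(2)) (auto simp: power2_diff)
  also have "\<dots> = m\<^sup>2 - 2 * m * (3 * c / 2 * (1 - 3 * p - p * L)) + 7 * c\<^sup>2 / 3 * ((1 - 2 * p) + p + p * L\<^sup>2)"
    by (simp add: field_simps)
  also have "\<dots> = 7 * c\<^sup>2 / 3 * (2 - p) - m\<^sup>2"
    unfolding m_def[symmetric] p_L by (simp add: power2_eq_square)
  also have "\<dots> = c\<^sup>2 * (7 / 3 * (2 - p) - 9 / 4 * (1 - 3 * p - p * L)\<^sup>2)"
    unfolding m2 by (simp add: algebra_simps)
  finally show ?thesis
    by (simp add: integral_X m_def)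
qed

lemma integral_eqml_X:
  "(\<integral>x. ln (nu \<gamma> x) + cond_var x / nu \<gamma> x \<partial>X_law) = eqml_three_block p \<kappa> \<gamma>"
  unfolding eqml_three_block_def using c_pos
  by (intro X_law_blockwise_const(2)) (auto simp: cond_var_near cond_var_far nu_bulk nu_near nu_far)

lemma integral_gee_X: "(\<integral>x. (nu \<gamma> x - cond_var x)\<^sup>2 \<partial>X_law) = gee_three_block p \<kappa> \<gamma>"
  unfolding gee_three_block_def using c_pos
  by (intro X_law_blockwise_const(2)) (auto simp: cond_var_near cond_var_far nu_bulk nu_near nu_far)

lemma integral_sandwich_bread_X:
  "(\<integral>x. x\<^sup>2 / nu \<gamma> x \<partial>X_law) = 7 * c\<^sup>2 / 3 * ((1 - 2 * p) / fst \<gamma> + (1 + p) / snd \<gamma>)"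
proof -
  have "(\<integral>x. x\<^sup>2 / nu \<gamma> x \<partial>X_law) = 7 * c\<^sup>2 / 3 * ((1 - 2 * p) * (1 / fst \<gamma>) + p * (1 / snd \<gamma>) + 1 / snd \<gamma>)"
    using c_pos by (intro X_law_blockwise_square(2)) (auto simp: nu_bulk nu_near nu_far)
  then show ?thesis
    by (simp add: add_divide_distrib)
qed

lemma integral_sandwich_meat_X:
  "(\<integral>x. cond_var x * x\<^sup>2 / (nu \<gamma> x)\<^sup>2 \<partial>X_law) =
    7 * c\<^sup>2 / 3 * \<kappa> * ((1 - 2 * p) / (fst \<gamma>)\<^sup>2 + 2 * p / (snd \<gamma>)\<^sup>2)"
proof -
  have "(\<integral>x. cond_var x * x\<^sup>2 / (nu \<gamma> x)\<^sup>2 \<partial>X_law) =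
      7 * c\<^sup>2 / 3 * ((1 - 2 * p) * (\<kappa> / (fst \<gamma>)\<^sup>2) + p * (\<kappa> / (snd \<gamma>)\<^sup>2) + \<kappa> * p / (snd \<gamma>)\<^sup>2)"
    using c_pos by (intro X_law_blockwise_square(2)) (auto simp: cond_var_near cond_var_far nu_bulk nu_near nu_far)
  then show ?thesis
    by (simp add: add_divide_distrib algebra_simps)
qed

lemma sets_joint_law [simp]: "sets joint_law = sets borel"
  using cond_var_pos by simp

lemma prob_space_joint_law: "prob_space joint_law"
  using cond_var_measurable cond_var_pos sets_X_law prob_space_X_law by (rule prob_space_cond_normal_law)

lemma space_joint_law [simp]: "space joint_law = UNIV"
  using sets_eq_imp_space_eq[OF sets_joint_law] by simp

lemma measurable_snd_joint_law [measurable]: "snd \<in> borel_measurable joint_law"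
  by (simp add: measurable_cong_sets[OF sets_joint_law refl])

lemma distr_snd_joint_law: "distr joint_law borel snd = X_law"
  using cond_var_measurable cond_var_pos sets_X_law by (rule distr_snd_cond_normal_law)

lemma integral_joint_law:
  fixes f :: "real \<Rightarrow> real" assumes "f \<in> borel_measurable borel"
  shows "(\<integral>z. f (snd z) \<partial>joint_law) = (\<integral>x. f x \<partial>X_law)"
  using cond_var_measurable cond_var_pos sets_X_law assms by (rule integral_snd_cond_normal_law)

lemma integrable_joint_law:
  fixes f :: "real \<Rightarrow> real" assumes "f \<in> borel_measurable borel"
  shows "integrable joint_law (\<lambda>z. f (snd z)) \<longleftrightarrow> integrable X_law f"
  using cond_var_measurable cond_var_pos sets_X_law assms by (rule integrable_snd_cond_normal_law)

lemma absolutely_continuous_joint_law: "absolutely_continuous lborel joint_law"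
proof -
  have "joint_law = density lborel (\<lambda>z. ennreal (three_block_density c L p (snd z))
      * ennreal (normal_density (snd z * \<beta>) (sqrt (cond_var (snd z))) (fst z)))"
    using cond_var_measurable cond_var_pos sets_X_law by (rule cond_normal_law_density_lborel) (simp_all add: X_law_def)
  then show ?thesis
    by (simp add: absolutely_continuousI_density normal_density_def)
qed

lemma eqml_obj_joint_law: "eqml_obj joint_law cond_var = eqml_three_block p \<kappa>"
proof (rule ext)
  fix \<gamma>
  have f: "(\<lambda>x. ln (nu \<gamma> x) + cond_var x / nu \<gamma> x) \<in> borel_measurable borel"
    by measurable
  show "eqml_obj joint_law cond_var \<gamma> = eqml_three_block p \<kappa> \<gamma>"
    unfolding eqml_obj_def integral_joint_law[OF f] by (rule integral_eqml_X)
qed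

lemma gee_obj_joint_law: "gee_obj joint_law cond_var = gee_three_block p \<kappa>"
proof (rule ext)
  fix \<gamma>
  have f: "(\<lambda>x. (nu \<gamma> x - cond_var x)\<^sup>2) \<in> borel_measurable borel"
    by measurable
  show "gee_obj joint_law cond_var \<gamma> = gee_three_block p \<kappa> \<gamma>"
    unfolding gee_obj_def integral_joint_law[OF f] by (rule integral_gee_X)
qed

lemma sandwich_joint_law: "sandwich joint_law cond_var = sandwich_three_block p \<kappa> (7 * c\<^sup>2 / 3)"
proof (rule ext)
  fix \<gamma>
  have bread: "(\<lambda>x. x\<^sup>2 / nu \<gamma> x) \<in> borel_measurable borel"
    by measurable
  have meat: "(\<lambda>x. cond_var x * x\<^sup>2 / (nu \<gamma> x)\<^sup>2) \<in> borel_measurable borel"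
    by measurable
  show "sandwich joint_law cond_var \<gamma> = sandwich_three_block p \<kappa> (7 * c\<^sup>2 / 3) \<gamma>"
    unfolding sandwich_def integral_joint_law[OF bread] integral_joint_law[OF meat]
      integral_sandwich_bread_X integral_sandwich_meat_X sandwich_three_block_def ..
qed

lemma is_argmin_eqml_joint_law: "is_argmin_on (eqml_obj joint_law cond_var) Gamma g \<longleftrightarrow> g = gamma_star p \<kappa>"
  unfolding eqml_obj_joint_law
  by (rule is_argmin_on_iff_strict_min[of _ _ "eqml_three_block p \<kappa>",
        OF gamma_star_in_Gamma eqml_three_block_strict_min, OF p_pos p_less_half \<kappa>_pos p_pos p_less_half \<kappa>_pos])

lemma is_argmin_gee_joint_law: "is_argmin_on (gee_obj joint_law cond_var) Gamma g \<longleftrightarrow> g = gamma_star p \<kappa>"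
  unfolding gee_obj_joint_law
  by (rule is_argmin_on_iff_strict_min[of _ _ "gee_three_block p \<kappa>",
        OF gamma_star_in_Gamma gee_three_block_strict_min, OF p_pos p_less_half \<kappa>_pos p_pos p_less_half \<kappa>_pos])

lemma sandwich_ratio_joint_law:
  "1 / (36 * p) \<le> sandwich joint_law cond_var (gamma_star p \<kappa>) / (INF \<gamma>\<in>Gamma. sandwich joint_law cond_var \<gamma>)"
  unfolding sandwich_joint_law using c_pos by (intro sandwich_three_block_ratio[OF p_pos p_small \<kappa>_pos]) simp

lemma measure_X_law_near: "measure X_law {- 2 * c..} = 1 - p"
proof -
  interpret X: prob_space X_law
    by (rule prob_space_X_law)
  have "(\<integral>x. indicator {- 2 * c..} x \<partial>X_law) = (1 - 2 * p) * 1 + p * 1 + p * (0 :: real)"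
  proof (rule X_law_blockwise_const(2))
    fix x assume "x \<le> - c * L"
    then show "indicator {- 2 * c..} x = (0 :: real)"
      using far_lt_near by fastforce
  qed (use c_pos in \<open>auto simp: indicator_def\<close>)
  then show ?thesis
    by simp
qed

lemma homoscedastic_approximation:
  obtains Pt where "in_Hom \<beta> Pt" and "absolutely_continuous lborel Pt"
    and "absolutely_continuous joint_law Pt" and "integrable Pt (entropy_density (exp 1) joint_law Pt)"
    and "KL Pt joint_law = - ln (1 - p)"
proof -
  interpret P: prob_space joint_law
    by (rule prob_space_joint_law)
  define B where "B = {- 2 * c..}"
  define h where "h x = ennreal (indicator B x / (1 - p))" for x
  have [measurable]: "B \<in> sets borel"
    by (simp add: B_def)
  have [measurable]: "h \<in> borel_measurable borel"
    unfolding h_def by measurable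
  have "P.prob (snd -` B) = measure (distr joint_law borel snd) B"
    using measure_distr[OF measurable_snd_joint_law, of B] by simp
  then have prob_B: "P.prob (snd -` B) = 1 - p"
    unfolding distr_snd_joint_law B_def measure_X_law_near .
  have events: "snd -` B \<in> P.events" and prob_pos: "0 < P.prob (snd -` B)"
    using prob_B p_small by (simp_all add: snd_vimage_in_sets_borel)
  define Pt where "Pt = density joint_law (\<lambda>z. ennreal (indicator (snd -` B) z / P.prob (snd -` B)))"
  note conditional = P.KL_divergence_conditional[OF _ events prob_pos, of "exp 1", folded Pt_def, simplified]
  have sets_Pt: "sets Pt = sets borel"
    by (simp add: Pt_def)
  have "Pt = cond_normal_law (density X_law h) \<beta> cond_var"
    unfolding Pt_def prob_B using density_snd_cond_normal_law[of cond_var h X_law \<beta>] cond_var_pos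
    by (simp add: h_def indicator_vimage)
  also have "\<dots> = cond_normal_law (density X_law h) \<beta> (\<lambda>_. (sqrt \<kappa>)\<^sup>2)"
  proof (rule cond_normal_law_cong_AE)
    show "AE x in density X_law h. cond_var x = (sqrt \<kappa>)\<^sup>2"
      using \<open>h \<in> borel_measurable borel\<close> \<kappa>_pos
      by (subst AE_density) (auto simp: measurable_cong_sets[OF sets_X_law refl] h_def B_def
          cond_var_near indicator_def intro!: AE_I2)
  qed (use cond_var_pos \<kappa>_pos in auto)
  finally have Pt: "Pt = cond_normal_law (density X_law h) \<beta> (\<lambda>_. (sqrt \<kappa>)\<^sup>2)" .
  have "prob_space (distr Pt borel snd)"
    using conditional(1)
    by (rule prob_space.prob_space_distr) (subst measurable_cong_sets[OF sets_Pt refl], rule measurable_snd_borel)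
  then have "prob_space (density X_law h)"
    unfolding Pt using \<kappa>_pos by (subst (asm) distr_snd_cond_normal_law) auto
  then have "in_Hom \<beta> Pt"
    unfolding in_Hom_def Pt using \<kappa>_pos
    by (intro exI[of _ "density X_law h"] exI[of _ "sqrt \<kappa>"]) auto
  moreover have "absolutely_continuous lborel Pt"
    using absolutely_continuous_joint_law conditional(2)
    by (auto simp: absolutely_continuous_def)
  ultimately show ?thesis
    using conditional prob_B that
    by (simp add: KL_def log_def)
qed

lemma joint_law_moments:
  "integrable joint_law (\<lambda>z. (snd z)\<^sup>2)"
  "(\<integral>z. (snd z - (\<integral>w. snd w \<partial>joint_law))\<^sup>2 \<partial>joint_law) =
    c\<^sup>2 * (7 / 3 * (2 - p) - 9 / 4 * (1 - 3 * p - p * L)\<^sup>2)"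
  "(\<integral>z. cond_var (snd z) \<partial>joint_law) = \<kappa> * (1 - p + p\<^sup>2)"
  "integrable joint_law (\<lambda>z. cond_var (snd z) * (snd z)\<^sup>2)"
proof -
  have mean: "(\<integral>w. snd w \<partial>joint_law) = (\<integral>x. x \<partial>X_law)"
    using integral_joint_law[of "\<lambda>x. x"] by simp
  show "integrable joint_law (\<lambda>z. (snd z)\<^sup>2)"
    using integrable_joint_law[of "\<lambda>x. x\<^sup>2"] integrable_X2 by simp
  show "(\<integral>z. (snd z - (\<integral>w. snd w \<partial>joint_law))\<^sup>2 \<partial>joint_law) =
      c\<^sup>2 * (7 / 3 * (2 - p) - 9 / 4 * (1 - 3 * p - p * L)\<^sup>2)"
    unfolding mean using integral_joint_law[of "\<lambda>x. (x - (\<integral>x. x \<partial>X_law))\<^sup>2"] variance_X by simp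
  show "(\<integral>z. cond_var (snd z) \<partial>joint_law) = \<kappa> * (1 - p + p\<^sup>2)"
    using integral_joint_law[OF cond_var_measurable] integral_cond_var by simp
  show "integrable joint_law (\<lambda>z. cond_var (snd z) * (snd z)\<^sup>2)"
    using integrable_joint_law[of "\<lambda>x. cond_var x * x\<^sup>2"] integrable_cond_var_X2 by simp
qed

end

lemma three_block_parameters:
  fixes \<tau> \<sigma> \<alpha> \<eta> :: real
  assumes "0 < \<tau>" and "0 < \<sigma>" and "0 < \<alpha>" and "1 \<le> \<eta>"
  obtains c L p \<kappa> where "three_block_design c L p \<kappa>" and "\<eta> \<le> 1 / (36 * p)" and "- ln (1 - p) \<le> \<alpha>"
    and "c\<^sup>2 * (7 / 3 * (2 - p) - 9 / 4 * (1 - 3 * p - p * L)\<^sup>2) = \<tau>\<^sup>2"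
    and "\<kappa> * (1 - p + p\<^sup>2) = \<sigma>\<^sup>2"
proof -
  define p where "p = min (1 / (100 * \<eta>)) ((1 - exp (- \<alpha>)) / 2)"
  define L where "L = 1 / sqrt p"
  have "exp (- \<alpha>) < 1"
    using assms(3) by simp
  have p_eta: "p \<le> 1 / (100 * \<eta>)" and p_alpha: "p \<le> (1 - exp (- \<alpha>)) / 2"
    unfolding p_def by (rule min.cobounded1, rule min.cobounded2)
  have "1 / (100 * \<eta>) \<le> 1 / 100"
    using assms(4) by (simp add: field_simps)
  moreover have "0 < p"
    using assms(4) \<open>exp (- \<alpha>) < 1\<close> by (simp add: p_def)
  ultimately have p: "0 < p" "p \<le> 1 / 100" "p \<le> 1 / (100 * \<eta>)" "p \<le> 1 - exp (- \<alpha>)"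
    using \<open>exp (- \<alpha>) < 1\<close> p_eta p_alpha by simp_all
  have "(sqrt p)\<^sup>2 \<le> (1 / 10)\<^sup>2"
    using p by (simp add: power_divide)
  then have "sqrt p \<le> 1 / 10"
    by (rule power2_le_imp_le) simp
  have pL: "p * L = sqrt p"
    using p(1) by (simp add: L_def real_div_sqrt)
  have pL2: "p * L\<^sup>2 = 1"
    using p(1) by (simp add: L_def power_divide)
  have "0 \<le> sqrt p"
    using p by simp
  then have "\<bar>1 - 3 * p - p * L\<bar> \<le> 1"
    using p \<open>sqrt p \<le> 1 / 10\<close> unfolding pL abs_le_iff by (intro conjI; linarith)
  then have "(1 - 3 * p - p * L)\<^sup>2 \<le> 1"
    by (simp add: abs_square_le_1)
  then have V: "0 < 7 / 3 * (2 - p) - 9 / 4 * (1 - 3 * p - p * L)\<^sup>2"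
    using p by simp
  define c where "c = \<tau> / sqrt (7 / 3 * (2 - p) - 9 / 4 * (1 - 3 * p - p * L)\<^sup>2)"
  define \<kappa> where "\<kappa> = \<sigma>\<^sup>2 / (1 - p + p\<^sup>2)"
  have "0 < 1 - p + p\<^sup>2"
    using p zero_le_power2[of p] by linarith
  show ?thesis
  proof
    show "three_block_design c L p \<kappa>"
      using p pL2 V assms \<open>0 < 1 - p + p\<^sup>2\<close>
      by unfold_locales (simp_all add: c_def \<kappa>_def L_def)
    show "\<eta> \<le> 1 / (36 * p)"
      using p assms(4) by (simp add: field_simps)
    have "exp (- \<alpha>) \<le> 1 - p"
      using p by simp
    then have "- \<alpha> \<le> ln (1 - p)"
      using p by (subst ln_ge_iff) auto
    then show "- ln (1 - p) \<le> \<alpha>"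
      by linarith
    show "c\<^sup>2 * (7 / 3 * (2 - p) - 9 / 4 * (1 - 3 * p - p * L)\<^sup>2) = \<tau>\<^sup>2"
      using V by (simp add: c_def power_divide)
    show "\<kappa> * (1 - p + p\<^sup>2) = \<sigma>\<^sup>2"
      using \<open>0 < 1 - p + p\<^sup>2\<close> by (simp add: \<kappa>_def)
  qed
qed

theorem proposition1:
  fixes \<beta> \<tau> \<sigma> \<alpha> \<eta> :: real
  assumes "0 < \<tau>" and "0 < \<sigma>" and "0 < \<alpha>" and "1 \<le> \<eta>"
  shows "\<exists>\<mu> v. het_model \<mu> v \<and>
    (let P = cond_normal_law \<mu> \<beta> v in
       absolutely_continuous lborel P \<and>
       (\<forall>\<epsilon>>0. \<exists>Pt. in_Hom \<beta> Pt \<and> absolutely_continuous lborel Pt \<and>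
              absolutely_continuous P Pt \<and> integrable Pt (entropy_density (exp 1) P Pt) \<and>
              KL Pt P \<le> \<alpha> + \<epsilon>) \<and>
       integrable P (\<lambda>z. (snd z)\<^sup>2) \<and>
       (\<integral>z. (snd z - (\<integral>w. snd w \<partial>P))\<^sup>2 \<partial>P) = \<tau>\<^sup>2 \<and>
       (\<integral>z. v (snd z) \<partial>P) = \<sigma>\<^sup>2 \<and>
       integrable P (\<lambda>z. v (snd z) * (snd z)\<^sup>2) \<and>
       (\<exists>g. is_argmin_on (eqml_obj P v) Gamma g) \<and>
       (\<exists>g. is_argmin_on (gee_obj P v) Gamma g) \<and>
       (\<forall>ge gg. is_argmin_on (eqml_obj P v) Gamma ge \<longrightarrow> is_argmin_on (gee_obj P v) Gamma gg \<longrightarrow>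
          min (sandwich P v ge) (sandwich P v gg) / (INF \<gamma>\<in>Gamma. sandwich P v \<gamma>) \<ge> \<eta>))"
proof -
  obtain c L p \<kappa> where design: "three_block_design c L p \<kappa>" and ratio: "\<eta> \<le> 1 / (36 * p)"
    and KL_small: "- ln (1 - p) \<le> \<alpha>"
    and var_X: "c\<^sup>2 * (7 / 3 * (2 - p) - 9 / 4 * (1 - 3 * p - p * L)\<^sup>2) = \<tau>\<^sup>2"
    and mean_var: "\<kappa> * (1 - p + p\<^sup>2) = \<sigma>\<^sup>2"
    using three_block_parameters[OF assms] .
  interpret three_block_design \<beta> c L p \<kappa>
    by (rule design)
  obtain Pt where "in_Hom \<beta> Pt" "absolutely_continuous lborel Pt" "absolutely_continuous joint_law Pt"
    "integrable Pt (entropy_density (exp 1) joint_law Pt)" "KL Pt joint_law = - ln (1 - p)"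
    by (rule homoscedastic_approximation)
  with KL_small have "\<exists>Pt. in_Hom \<beta> Pt \<and> absolutely_continuous lborel Pt \<and> absolutely_continuous joint_law Pt \<and>
      integrable Pt (entropy_density (exp 1) joint_law Pt) \<and> KL Pt joint_law \<le> \<alpha> + \<epsilon>" if "0 < \<epsilon>" for \<epsilon>
    using that by (intro exI[of _ Pt]) simp
  moreover have "\<eta> \<le> min (sandwich joint_law cond_var ge) (sandwich joint_law cond_var gg) /
      (INF \<gamma>\<in>Gamma. sandwich joint_law cond_var \<gamma>)"
    if "is_argmin_on (eqml_obj joint_law cond_var) Gamma ge" "is_argmin_on (gee_obj joint_law cond_var) Gamma gg"
    for ge gg
    using that ratio sandwich_ratio_joint_law by (simp add: is_argmin_eqml_joint_law is_argmin_gee_joint_law)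
  ultimately show ?thesis
    using het_model_X_law absolutely_continuous_joint_law joint_law_moments(1,4)
      joint_law_moments(2)[unfolded var_X] joint_law_moments(3)[unfolded mean_var]
      is_argmin_eqml_joint_law is_argmin_gee_joint_law
    unfolding Let_def by (intro exI[of _ X_law] exI[of _ cond_var]) blast
qed

end
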